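(* Every tubal tensor $\mathcal A\in\mathbb{C}_p^{I_1\times\cdots\times I_N}$ can be written as $$\mathcal A=\mathcal S*_1\mathcal U_1*_2\mathcal U_2\cdots*_N\mathcal U_N,$$ where (1) each $\mathcal U_n\in\mathbb{C}_p^{I_n\times I_n}$ is unitary, and (2) $\mathcal S\in\mathbb{C}_p^{I_1\times\cdots\times I_N}$ is all-orthogonal: for all $1\le n\le N$ and all $1\le\alpha\neq\beta\le I_n$, $$\sum_{i_1,\dots,i_{n-1},i_{n+1},\dots,i_N}\mathcal S(i_1,\dots,i_{n-1},\alpha,i_{n+1},\dots,i_N)^H*\mathcal S(i_1,\dots,i_{n-1},\beta,i_{n+1},\dots,i_N)=\mathbf 0.$$ Moreover, if $L=cW$ with $c\in\mathbb{C}\setminus\{0\}$ and $W\in\mathbb{C}^{p\times p}$ a unitary matrix, then $\mathcal U_n$ and $\mathcal S$ can be chosen so that in addition the ordering property holds: for every $n$, $\|\mathcal S_{i_n=1}\|\ge\|\mathcal S_{i_n=2}\|\ge\cdots\ge\|\mathcal S_{i_n=I_n}\|$, where $\mathcal S_{i_n=\alpha}$ is the subtensor of $\mathcal S$ obtained by fixing the $n$-th index to $\alpha$ (equivalently the $\alpha$-th row of $\mathcal S_{(n)}$).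
   Context: Fix an integer $p\ge1$ and an invertible linear map $L:\mathbb{C}^p\to\mathbb{C}^p$. A tubal scalar is an element of $\mathbb{C}_p:=\mathbb{C}^p$; $\mathbf 0$ is the zero tubal scalar. The tensor-tensor product of tubal scalars is $\mathbf a*\mathbf b=L^{-1}(L(\mathbf a)\odot L(\mathbf b))$, where $\odot$ is the componentwise product. A tubal matrix $\mathcal A\in\mathbb{C}_p^{I\times J}$ is an $I\times J$ array of tubal scalars (identified with an array in $\mathbb{C}^{I\times J\times p}$); its $k$-th frontal slice $\mathcal A^{(k)}$ has entries $\mathcal A(i,j)^{(k)}$, and $L(\mathcal A)$ is obtained by applying $L$ to every entry. For $\mathcal A\in\mathbb{C}_p^{I\times J}$, $\mathcal B\in\mathbb{C}_p^{J\times K}$, $(\mathcal A*\mathcal B)(i,k)=\sum_j\mathcal A(i,j)*\mathcal B(j,k)$; equivalently $L(\mathcal A*\mathcal B)^{(k)}=L(\mathcal A)^{(k)}L(\mathcal B)^{(k)}$. The identity $\mathcal I_I$ has $L(\mathcal I_I)^{(k)}$ equal to the identity matrix for all $k$. The Hermitian transpose is defined by $L(\mathcal A^H)^{(k)}=(L(\mathcal A)^{(k)})^H$ (for a tubal scalar, viewed as a $1\times1$ tubal matrix). $\mathcal A\in\mathbb{C}_p^{I\times I}$ is unitary if $\mathcal A*\mathcal A^H=\mathcal A^H*\mathcal A=\mathcal I_I$. A tubal tensor $\mathcal A\in\mathbb{C}_p^{I_1\times\cdots\times I_N}$ is an $N$-way array of tubal scalars. Its mode-$n$ unfolding $\mathcal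 A_{(n)}\in\mathbb{C}_p^{I_n\times\prod_{m\neq n}I_m}$ has $\mathcal A_{(n)}(i_n,j)=\mathcal A(i_1,\dots,i_N)$, where $j=1+\sum_{k\neq n}(i_k-1)\prod_{m<k,\,m\neq n}I_m$. For $\mathcal U\in\mathbb{C}_p^{J\times I_n}$, the $n$-mode product is $(\mathcal A*_n\mathcal U)(i_1,\dots,i_{n-1},j,i_{n+1},\dots,i_N)=\sum_{i_n}\mathcal A(i_1,\dots,i_N)*\mathcal U(j,i_n)$; repeated mode products are evaluated left to right. $\|\cdot\|$ denotes the Frobenius norm (Euclidean norm of all complex entries of the underlying array). *)

theory Defs
  imports "HOL-Analysis.Analysis"
begin

text \<open>Tubal scalars are vectors in complex^'p (p = CARD('p)); the invertible linear
map L is given by its matrix L :: complex^'p^'p (acting by L *v a).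
Tubal matrices are functions nat => nat => tubal scalar (0-based indices, only the
entries with valid indices matter); tubal tensors of size dims!0 x ... x dims!(N-1)
are functions from index lists (0-based) to tubal scalars.\<close>

type_synonym 'p tubal = "complex ^ 'p"

definition tprod :: "complex^'p::finite^'p \<Rightarrow> 'p tubal \<Rightarrow> 'p tubal \<Rightarrow> 'p tubal" where
  "tprod L a b = matrix_inv L *v (\<chi> k. (L *v a)$k * (L *v b)$k)"

definition tconj :: "complex^'p::finite^'p \<Rightarrow> 'p tubal \<Rightarrow> 'p tubal" where
  "tconj L a = matrix_inv L *v (\<chi> k. cnj ((L *v a)$k))"

definition tmat_mult :: "complex^'p::finite^'p \<Rightarrow> nat \<Rightarrow> (nat \<Rightarrow> nat \<Rightarrow> 'p tubal)
    \<Rightarrow> (nat \<Rightarrow> nat \<Rightarrow> 'p tubal) \<Rightarrow> (nat \<Rightarrow> nat \<Rightarrow> 'p tubal)" where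
  "tmat_mult L J A B = (\<lambda>i k. \<Sum>j<J. tprod L (A i j) (B j k))"

definition tmat_herm :: "complex^'p::finite^'p \<Rightarrow> (nat \<Rightarrow> nat \<Rightarrow> 'p tubal) \<Rightarrow> (nat \<Rightarrow> nat \<Rightarrow> 'p tubal)" where
  "tmat_herm L A = (\<lambda>i j. tconj L (A j i))"

text \<open>Identity: L(I)^(k) is the identity for every k, i.e. diagonal entries are
L^{-1}(1,...,1) and off-diagonal entries are 0.\<close>
definition tmat_id :: "complex^'p::finite^'p \<Rightarrow> nat \<Rightarrow> nat \<Rightarrow> 'p tubal" where
  "tmat_id L = (\<lambda>i j. if i = j then matrix_inv L *v (\<chi> k. 1) else 0)"

definition tunitary :: "complex^'p::finite^'p \<Rightarrow> nat \<Rightarrow> (nat \<Rightarrow> nat \<Rightarrow> 'p tubal) \<Rightarrow> bool" where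
  "tunitary L n U \<longleftrightarrow>
     (\<forall>i<n. \<forall>j<n. tmat_mult L n U (tmat_herm L U) i j = tmat_id L i j
                 \<and> tmat_mult L n (tmat_herm L U) U i j = tmat_id L i j)"

definition idx_set :: "nat list \<Rightarrow> nat list set" where
  "idx_set dims = {is. length is = length dims \<and> (\<forall>k<length dims. is!k < dims!k)}"

definition mode_prod :: "complex^'p::finite^'p \<Rightarrow> nat list \<Rightarrow> (nat list \<Rightarrow> 'p tubal) \<Rightarrow> nat
    \<Rightarrow> (nat \<Rightarrow> nat \<Rightarrow> 'p tubal) \<Rightarrow> (nat list \<Rightarrow> 'p tubal)" where
  "mode_prod L dims A n U = (\<lambda>is. \<Sum>i<dims!n. tprod L (A (is[n := i])) (U (is!n) i))"

definition multi_mode_prod :: "complex^'p::finite^'p \<Rightarrow> nat list \<Rightarrow> (nat list \<Rightarrow> 'p tubal)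
    \<Rightarrow> (nat \<Rightarrow> nat \<Rightarrow> nat \<Rightarrow> 'p tubal) \<Rightarrow> (nat list \<Rightarrow> 'p tubal)" where
  "multi_mode_prod L dims S Us = foldl (\<lambda>T n. mode_prod L dims T n (Us n)) S [0..<length dims]"

definition all_orthogonal :: "complex^'p::finite^'p \<Rightarrow> nat list \<Rightarrow> (nat list \<Rightarrow> 'p tubal) \<Rightarrow> bool" where
  "all_orthogonal L dims S \<longleftrightarrow>
     (\<forall>n<length dims. \<forall>\<alpha><dims!n. \<forall>\<beta><dims!n. \<alpha> \<noteq> \<beta> \<longrightarrow>
        (\<Sum>is\<in>{is\<in>idx_set dims. is!n = \<alpha>}. tprod L (tconj L (S is)) (S (is[n := \<beta>]))) = 0)"

definition slice_norm :: "nat list \<Rightarrow> (nat list \<Rightarrow> ('p::finite) tubal) \<Rightarrow> nat \<Rightarrow> nat \<Rightarrow> real" where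
  "slice_norm dims S n \<alpha> = sqrt (\<Sum>is\<in>{is\<in>idx_set dims. is!n = \<alpha>}. \<Sum>k\<in>UNIV. (cmod ((S is)$k))\<^sup>2)"

definition ordered_slices :: "nat list \<Rightarrow> (nat list \<Rightarrow> ('p::finite) tubal) \<Rightarrow> bool" where
  "ordered_slices dims S \<longleftrightarrow>
     (\<forall>n<length dims. \<forall>\<alpha> \<beta>. \<alpha> \<le> \<beta> \<and> \<beta> < dims!n \<longrightarrow> slice_norm dims S n \<beta> \<le> slice_norm dims S n \<alpha>)"

definition cmat_unitary :: "complex^'p::finite^'p \<Rightarrow> bool" where
  "cmat_unitary W \<longleftrightarrow> (let Wh = (\<chi> i j. cnj (W$j$i)) in W ** Wh = mat 1 \<and> Wh ** W = mat 1)"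

end

theory Submission
  imports Defs Jordan_Normal_Form.Char_Poly
begin

text \<open>Since \<open>L\<close> turns the t-product into the entrywise product, each frontal slice
  \<open>k\<close> of \<open>L(\<A>)\<close> is an ordinary complex tensor, and a t-HOSVD of \<open>\<A>\<close> is assembled
  from the classical complex HOSVDs of these slices. For a complex tensor, the mode-\<open>n\<close>
  factor is a unitary matrix of eigenvectors of the Gram matrix of the mode-\<open>n\<close> unfolding,
  ordered by decreasing eigenvalue (spectral theorem, proved by deflation from an eigenvector
  of the largest eigenvalue). Multiplying \<open>\<A>\<close> by the adjoint factors in all modes gives a
  core whose mode-\<open>n\<close> Gram matrices are diagonal, i.e. all-orthogonal, with the eigenvalues,
  the squared slice norms, in decreasing order on the diagonal. If \<open>L = c W\<close> with \<open>W\<close>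
  unitary, then \<open>\<parallel>L(\<S>)\<parallel> = |c| \<parallel>\<S>\<parallel>\<close> slice by slice, so the ordering carries over
  from \<open>L(\<S>)\<close> to \<open>\<S>\<close>.\<close>

definition fm_eigenvector :: "nat \<Rightarrow> (nat \<Rightarrow> nat \<Rightarrow> complex) \<Rightarrow> complex \<Rightarrow> (nat \<Rightarrow> complex) \<Rightarrow> bool" where
  "fm_eigenvector n G e x \<longleftrightarrow> (\<exists>i<n. x i \<noteq> 0) \<and> (\<forall>i<n. (\<Sum>j<n. G i j * x j) = e * x i)"

lemma eigenvalue_mat_iff_fm_eigenvector:
  "eigenvalue (Matrix.mat n n (\<lambda>(i, j). G i j)) e \<longleftrightarrow> (\<exists>x. fm_eigenvector n G e x)"
proof
  let ?A = "Matrix.mat n n (\<lambda>(i, j). G i j)"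
  have A: "?A \<in> carrier_mat n n" by simp
  have row: "(?A *\<^sub>v v) $ i = (\<Sum>j<n. G i j * v $ j)" if "v \<in> carrier_vec n" "i < n" for v i
    using that by (simp add: scalar_prod_def row_def atLeast0LessThan)
  show "\<exists>x. fm_eigenvector n G e x" if ev: "eigenvalue ?A e"
  proof -
    obtain v where v: "v \<in> carrier_vec n" "v \<noteq> 0\<^sub>v n" "?A *\<^sub>v v = e \<cdot>\<^sub>v v"
      using ev A unfolding eigenvalue_def eigenvector_def by auto
    have "\<exists>i<n. v $ i \<noteq> 0"
      using v(1,2) by (metis eq_vecI carrier_vecD index_zero_vec)
    moreover have "(\<Sum>j<n. G i j * v $ j) = e * v $ i" if "i < n" for i
      using row[OF v(1) that] v(1,3) that by simp
    ultimately show ?thesis unfolding fm_eigenvector_def by blast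
  qed
  show "eigenvalue ?A e" if ex: "\<exists>x. fm_eigenvector n G e x"
  proof -
    obtain x where x: "fm_eigenvector n G e x" using ex by blast
    have "vec n x \<noteq> 0\<^sub>v n" using x unfolding fm_eigenvector_def by (auto simp: vec_eq_iff)
    moreover have "?A *\<^sub>v vec n x = e \<cdot>\<^sub>v vec n x"
      using x row[of "vec n x"] unfolding fm_eigenvector_def by (intro eq_vecI) auto
    ultimately show ?thesis
      using A unfolding eigenvalue_def eigenvector_def by (auto intro!: exI[of _ "vec n x"])
  qed
qed

lemma fm_eigenvalues_finite_nonempty:
  assumes "n > 0"
  shows "finite {e. \<exists>x. fm_eigenvector n G e x}" "{e. \<exists>x. fm_eigenvector n G e x} \<noteq> {}"
proof -
  let ?A = "Matrix.mat n n (\<lambda>(i, j). G i j)"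
  obtain es where cp: "char_poly ?A = (\<Prod>a \<leftarrow> es. [:- a, 1:])" and len: "length es = n"
    using char_poly_factorized[of ?A n] by auto
  have "{e. \<exists>x. fm_eigenvector n G e x} = set es"
    unfolding eigenvalue_mat_iff_fm_eigenvector[symmetric] eigenvalue_root_char_poly[of ?A n, simplified] cp
    by (simp add: poly_prod_list prod_list_zero_iff image_iff)
  then show "finite {e. \<exists>x. fm_eigenvector n G e x}" "{e. \<exists>x. fm_eigenvector n G e x} \<noteq> {}"
    using len assms by auto
qed

no_notation vec_index (infixl "$" 100)

text \<open>An \<open>n \<times> n\<close> complex matrix is a function \<open>nat \<Rightarrow> nat \<Rightarrow> complex\<close> of which only the
  entries below \<open>n\<close> matter.\<close>

definition fm_mult :: "nat \<Rightarrow> (nat \<Rightarrow> nat \<Rightarrow> complex) \<Rightarrow> (nat \<Rightarrow> nat \<Rightarrow> complex) \<Rightarrow> nat \<Rightarrow> nat \<Rightarrow> complex" where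
  "fm_mult n A B = (\<lambda>i j. \<Sum>k<n. A i k * B k j)"

definition fm_adj :: "(nat \<Rightarrow> nat \<Rightarrow> complex) \<Rightarrow> nat \<Rightarrow> nat \<Rightarrow> complex" where
  "fm_adj A = (\<lambda>i j. cnj (A j i))"

definition fm_id :: "nat \<Rightarrow> nat \<Rightarrow> complex" where
  "fm_id = (\<lambda>i j. if i = j then 1 else 0)"

definition fm_unitary :: "nat \<Rightarrow> (nat \<Rightarrow> nat \<Rightarrow> complex) \<Rightarrow> bool" where
  "fm_unitary n P \<longleftrightarrow> (\<forall>i<n. \<forall>j<n. fm_mult n P (fm_adj P) i j = fm_id i j \<and> fm_mult n (fm_adj P) P i j = fm_id i j)"

definition fm_hermitian :: "nat \<Rightarrow> (nat \<Rightarrow> nat \<Rightarrow> complex) \<Rightarrow> bool" where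
  "fm_hermitian n G \<longleftrightarrow> (\<forall>i<n. \<forall>j<n. G j i = cnj (G i j))"

lemma fm_mult_assoc: "fm_mult n (fm_mult n A B) C = fm_mult n A (fm_mult n B C)"
  unfolding fm_mult_def
  by (auto simp: fun_eq_iff sum_distrib_left sum_distrib_right mult.assoc intro: sum.swap)

lemma fm_adj_mult: "fm_adj (fm_mult n A B) = fm_mult n (fm_adj B) (fm_adj A)"
  unfolding fm_mult_def fm_adj_def by (auto simp: fun_eq_iff mult.commute)

lemma fm_adj_adj [simp]: "fm_adj (fm_adj A) = A"
  unfolding fm_adj_def by auto

lemma cnj_fm_id [simp]: "cnj (fm_id i j) = fm_id i j"
  by (simp add: fm_id_def)

lemma fm_id_simps [simp]:
  "fm_id i i = 1" "fm_id (Suc i) 0 = 0" "fm_id 0 (Suc j) = 0" "fm_id (Suc i) (Suc j) = fm_id i j"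
  unfolding fm_id_def by auto

lemma fm_id_mult [simp]: "fm_id i j * y = (if i = j then y else 0)"
  by (simp add: fm_id_def)

lemma mult_fm_id [simp]: "y * fm_id i j = (if i = j then y else 0)"
  by (simp add: fm_id_def)

lemma fm_mult_id_left: "i < n \<Longrightarrow> fm_mult n fm_id A i j = A i j"
  by (simp add: fm_mult_def)

lemma fm_mult_id_right: "j < n \<Longrightarrow> fm_mult n A fm_id i j = A i j"
  by (simp add: fm_mult_def)

lemma fm_adj_id [simp]: "fm_adj fm_id = fm_id"
  by (auto simp: fm_adj_def fm_id_def fun_eq_iff)

lemma fm_mult_cong_right: "(\<And>k. k < n \<Longrightarrow> X k j = Y k j) \<Longrightarrow> fm_mult n A X i j = fm_mult n A Y i j"
  unfolding fm_mult_def by (auto intro: sum.cong)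

lemma fm_mult_cong_left: "(\<And>k. k < n \<Longrightarrow> X i k = Y i k) \<Longrightarrow> fm_mult n X A i j = fm_mult n Y A i j"
  unfolding fm_mult_def by (auto intro: sum.cong)

lemma fm_unitary_id: "fm_unitary n fm_id"
  unfolding fm_unitary_def by (auto simp: fm_mult_id_left)

lemma fm_unitary_adj: "fm_unitary n P \<Longrightarrow> fm_unitary n (fm_adj P)"
  unfolding fm_unitary_def by auto

lemma fm_unitary_rows: "fm_unitary n P \<Longrightarrow> i < n \<Longrightarrow> j < n \<Longrightarrow> (\<Sum>k<n. P i k * cnj (P j k)) = fm_id i j"
  unfolding fm_unitary_def fm_mult_def fm_adj_def by auto

lemma fm_unitary_cols: "fm_unitary n P \<Longrightarrow> i < n \<Longrightarrow> j < n \<Longrightarrow> (\<Sum>k<n. cnj (P k i) * P k j) = fm_id i j"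
  unfolding fm_unitary_def fm_mult_def fm_adj_def by auto

lemma fm_unitary_cnj:
  assumes "fm_unitary n P"
  shows "fm_unitary n (\<lambda>i j. cnj (P i j))"
proof -
  have "(\<Sum>k<n. cnj (P i k) * P j k) = fm_id i j" "(\<Sum>k<n. P k i * cnj (P k j)) = fm_id i j"
    if "i < n" "j < n" for i j
    using fm_unitary_rows[OF assms that(2,1)] fm_unitary_cols[OF assms that(2,1)]
    by (simp_all add: mult.commute fm_id_def)
  then show ?thesis unfolding fm_unitary_def fm_mult_def fm_adj_def by simp
qed

lemma fm_unitary_mult:
  assumes A: "fm_unitary n A" and B: "fm_unitary n B"
  shows "fm_unitary n (fm_mult n A B)"
  unfolding fm_unitary_def
proof (intro allI impI conjI)
  fix i j assume ij: "i < n" "j < n"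
  have "fm_mult n (fm_mult n A B) (fm_adj (fm_mult n A B)) i j
      = fm_mult n A (fm_mult n (fm_mult n B (fm_adj B)) (fm_adj A)) i j"
    by (simp add: fm_adj_mult fm_mult_assoc)
  also have "\<dots> = fm_mult n A (fm_mult n fm_id (fm_adj A)) i j"
    using B unfolding fm_unitary_def by (intro fm_mult_cong_right fm_mult_cong_left) auto
  also have "\<dots> = fm_mult n A (fm_adj A) i j"
    by (intro fm_mult_cong_right) (simp add: fm_mult_id_left)
  also have "\<dots> = fm_id i j" using A ij unfolding fm_unitary_def by auto
  finally show "fm_mult n (fm_mult n A B) (fm_adj (fm_mult n A B)) i j = fm_id i j" .
  have "fm_mult n (fm_adj (fm_mult n A B)) (fm_mult n A B) i j
      = fm_mult n (fm_adj B) (fm_mult n (fm_mult n (fm_adj A) A) B) i j"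
    by (simp add: fm_adj_mult fm_mult_assoc)
  also have "\<dots> = fm_mult n (fm_adj B) (fm_mult n fm_id B) i j"
    using A unfolding fm_unitary_def by (intro fm_mult_cong_right fm_mult_cong_left) auto
  also have "\<dots> = fm_mult n (fm_adj B) B i j"
    by (intro fm_mult_cong_right) (simp add: fm_mult_id_left)
  also have "\<dots> = fm_id i j" using B ij unfolding fm_unitary_def by auto
  finally show "fm_mult n (fm_adj (fm_mult n A B)) (fm_mult n A B) i j = fm_id i j" .
qed

lemma cnj_mult_self: "cnj z * z = complex_of_real ((cmod z)\<^sup>2)"
  by (metis complex_norm_square mult.commute)

lemma sum_cnj_mult_self: "(\<Sum>k\<in>K. cnj (v k) * v k) = complex_of_real (\<Sum>k\<in>K. (cmod (v k))\<^sup>2)"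
  by (simp add: cnj_mult_self)

lemma sum_cnj_mult_self_eq_0D:
  fixes v :: "nat \<Rightarrow> complex"
  assumes "(\<Sum>k<n. cnj (v k) * v k) = 0" "i < n"
  shows "v i = 0"
proof -
  have "(\<Sum>k<n. (cmod (v k))\<^sup>2) = 0"
    using assms(1) unfolding sum_cnj_mult_self by (simp only: of_real_eq_0_iff)
  moreover have "(cmod (v i))\<^sup>2 \<le> (\<Sum>k<n. (cmod (v k))\<^sup>2)"
    using assms(2) by (intro member_le_sum) auto
  ultimately show ?thesis by simp
qed

lemma fm_unitary_householder:
  assumes s: "(\<Sum>k<m. cnj (v k) * v k) \<noteq> 0"
  shows "fm_unitary m (\<lambda>i j. fm_id i j - 2 / (\<Sum>k<m. cnj (v k) * v k) * v i * cnj (v j))"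
    (is "fm_unitary m ?W")
proof -
  define s where "s = (\<Sum>k<m. cnj (v k) * v k)"
  define c where "c = 2 / s"
  have W: "?W = (\<lambda>i j. fm_id i j - c * v i * cnj (v j))" unfolding c_def s_def ..
  have cs: "c * s = 2" using s unfolding c_def s_def by simp
  have "cnj s = s" unfolding s_def sum_cnj_mult_self by simp
  then have cc: "cnj c = c" unfolding c_def by simp
  have adj: "fm_adj ?W = ?W"
    unfolding W fm_adj_def by (auto simp: fun_eq_iff cc fm_id_def mult_ac)
  have sq: "(\<Sum>k<m. (c * v i * cnj (v k)) * (c * v k * cnj (v j))) = c * c * v i * cnj (v j) * s" for i j
    unfolding s_def by (simp add: sum_distrib_left mult_ac)
  have "fm_mult m ?W ?W i j = fm_id i j" if "i < m" "j < m" for i j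
  proof -
    have "fm_mult m ?W ?W i j = (\<Sum>k<m. fm_id i k * fm_id k j) - (\<Sum>k<m. fm_id i k * (c * v k * cnj (v j)))
       - (\<Sum>k<m. (c * v i * cnj (v k)) * fm_id k j) + (\<Sum>k<m. (c * v i * cnj (v k)) * (c * v k * cnj (v j)))"
      unfolding fm_mult_def W by (simp add: algebra_simps sum.distrib sum_subtractf)
    also have "\<dots> = fm_id i j - c * v i * cnj (v j) - c * v i * cnj (v j) + c * c * v i * cnj (v j) * s"
      unfolding sq using that by simp
    also have "\<dots> = fm_id i j - 2 * (c * v i * cnj (v j)) + (c * s) * (c * v i * cnj (v j))"
      by (simp add: algebra_simps)
    also have "\<dots> = fm_id i j" unfolding cs by simp
    finally show ?thesis .
  qed
  then show ?thesis unfolding fm_unitary_def adj by auto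
qed

text \<open>The Householder reflection along \<open>x - e\<^sub>0\<close> maps \<open>e\<^sub>0\<close> to \<open>x\<close> because \<open>x\<^sub>0\<close> is real.\<close>
lemma fm_unitary_first_column:
  assumes norm: "(\<Sum>k<m. cnj (x k) * x k) = 1" and m: "0 < m" and x0: "x 0 = of_real r"
  shows "\<exists>W. fm_unitary m W \<and> (\<forall>i<m. W i 0 = x i)"
proof -
  define v where "v i = x i - fm_id i 0" for i
  define s where "s = (\<Sum>k<m. cnj (v k) * v k)"
  show ?thesis
  proof (cases "s = 0")
    case True
    then have "x i = fm_id i 0" if "i < m" for i
      using sum_cnj_mult_self_eq_0D[OF True[unfolded s_def] that] unfolding v_def by simp
    then show ?thesis using fm_unitary_id by metis
  next
    case False
    have "s = (\<Sum>k<m. cnj (x k) * x k) - (\<Sum>k<m. fm_id k 0 * x k)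
        - (\<Sum>k<m. cnj (x k) * fm_id k 0) + (\<Sum>k<m. fm_id k 0 * fm_id k 0)"
      unfolding s_def v_def by (simp add: algebra_simps sum.distrib sum_subtractf)
    also have "\<dots> = 2 - 2 * of_real r"
      using m x0 norm by simp
    finally have "s = 2 - 2 * of_real r" .
    then have c: "2 / s * cnj (v 0) = -1"
      using False unfolding v_def by (auto simp: x0 field_simps)
    have "fm_id i 0 - 2 / s * v i * cnj (v 0) = x i" for i
    proof -
      have "fm_id i 0 - 2 / s * v i * cnj (v 0) = fm_id i 0 - v i * (2 / s * cnj (v 0))"
        by (simp add: mult_ac)
      then show ?thesis unfolding c by (simp add: v_def)
    qed
    then show ?thesis
      using fm_unitary_householder[where m=m and v=v] False unfolding s_def by blast
  qed
qed

lemma fm_hermitian_eigenvalue_real: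
  assumes h: "fm_hermitian m G" and x: "fm_eigenvector m G e x"
  shows "cnj e = e"
proof -
  define t where "t = (\<Sum>i<m. cnj (x i) * x i)"
  define q where "q = (\<Sum>i<m. \<Sum>j<m. cnj (x i) * G i j * x j)"
  have "q = (\<Sum>i<m. cnj (x i) * (\<Sum>j<m. G i j * x j))"
    unfolding q_def by (simp add: sum_distrib_left mult.assoc)
  also have "\<dots> = (\<Sum>i<m. cnj (x i) * (e * x i))"
    using x unfolding fm_eigenvector_def by simp
  finally have q: "q = e * t" unfolding t_def by (simp add: sum_distrib_left mult_ac)
  have "cnj q = (\<Sum>i<m. \<Sum>j<m. x i * cnj (G i j) * cnj (x j))"
    unfolding q_def by simp
  also have "\<dots> = (\<Sum>i<m. \<Sum>j<m. x i * G j i * cnj (x j))"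
    using h unfolding q_def fm_hermitian_def by (intro sum.cong refl) (metis lessThan_iff)
  also have "\<dots> = q" unfolding q_def by (subst sum.swap) (simp add: mult_ac)
  finally have "cnj q = q" .
  moreover have "cnj t = t" unfolding t_def sum_cnj_mult_self by simp
  moreover have "t \<noteq> 0"
    using x sum_cnj_mult_self_eq_0D[where n=m and v=x] unfolding t_def fm_eigenvector_def by blast
  ultimately show ?thesis using q by simp
qed

lemma fm_eigenvector_normalize:
  assumes x: "fm_eigenvector m G e x"
  obtains y r where "(\<Sum>k<m. cnj (y k) * y k) = 1" "y 0 = of_real r"
    "\<forall>i<m. (\<Sum>j<m. G i j * y j) = e * y i"
proof -
  define t where "t = (\<Sum>k<m. (cmod (x k))\<^sup>2)"
  have "t > 0"
  proof -
    obtain i where "i < m" "x i \<noteq> 0" using x unfolding fm_eigenvector_def by blast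
    then have "0 < (cmod (x i))\<^sup>2" "(cmod (x i))\<^sup>2 \<le> t"
      unfolding t_def by (auto intro!: member_le_sum)
    then show ?thesis by linarith
  qed
  define om where "om = (if x 0 = 0 then 1 else of_real (cmod (x 0)) / x 0)"
  define c where "c = om / of_real (sqrt t)"
  have om: "cnj om * om = 1"
    unfolding om_def
    by (auto simp: field_simps) (metis cnj_mult_self mult.commute of_real_mult power2_eq_square)
  have "cnj c * c = (cnj om * om) / (of_real (sqrt t) * of_real (sqrt t))"
    unfolding c_def by simp
  also have "\<dots> = 1 / of_real t"
    using om \<open>t > 0\<close> by (simp flip: of_real_mult)
  finally have cc: "cnj c * c = 1 / of_real t" .
  have "(\<Sum>k<m. cnj (c * x k) * (c * x k)) = cnj c * c * (\<Sum>k<m. cnj (x k) * x k)"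
    by (simp add: sum_distrib_left mult_ac)
  also have "\<dots> = 1"
    unfolding cc sum_cnj_mult_self t_def[symmetric] using \<open>t > 0\<close> by simp
  finally have "(\<Sum>k<m. cnj (c * x k) * (c * x k)) = 1" .
  moreover have "c * x 0 = of_real (cmod (x 0) / sqrt t)"
    unfolding c_def om_def by simp
  moreover have "\<forall>i<m. (\<Sum>j<m. G i j * (c * x j)) = e * (c * x i)"
    using x unfolding fm_eigenvector_def by (simp add: sum_distrib_left mult_ac flip: sum_distrib_left)
  ultimately show ?thesis by (rule that)
qed

definition fm_eigenbasis :: "nat \<Rightarrow> (nat \<Rightarrow> nat \<Rightarrow> complex) \<Rightarrow> (nat \<Rightarrow> nat \<Rightarrow> complex) \<Rightarrow> (nat \<Rightarrow> real) \<Rightarrow> bool" where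
  "fm_eigenbasis n G P d \<longleftrightarrow> fm_unitary n P \<and> (\<forall>i<n. \<forall>j<n. fm_mult n G P i j = P i j * of_real (d j))"

lemma fm_eigenbasis_column:
  assumes P: "fm_eigenbasis n G P d" and j: "j < n"
  shows "fm_eigenvector n G (of_real (d j)) (\<lambda>k. P k j)"
proof -
  have "\<exists>k<n. P k j \<noteq> 0"
  proof (rule ccontr)
    assume "\<not> ?thesis"
    then have "fm_mult n (fm_adj P) P j j = 0" unfolding fm_mult_def by (simp add: fm_adj_def)
    moreover have "fm_mult n (fm_adj P) P j j = 1"
      using P j unfolding fm_eigenbasis_def fm_unitary_def by simp
    ultimately show False by simp
  qed
  moreover have "\<forall>k<n. (\<Sum>l<n. G k l * P l j) = of_real (d j) * P k j"
    using P j unfolding fm_eigenbasis_def fm_mult_def by (simp add: mult.commute)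
  ultimately show ?thesis unfolding fm_eigenvector_def by blast
qed

lemma fm_hermitian_conj:
  assumes "fm_hermitian m G"
  shows "fm_hermitian m (fm_mult m (fm_mult m (fm_adj W) G) W)"
  unfolding fm_hermitian_def
proof (intro allI impI)
  fix i j assume ij: "i < m" "j < m"
  have "cnj (fm_mult m (fm_mult m (fm_adj W) G) W i j) = fm_adj (fm_mult m (fm_mult m (fm_adj W) G) W) j i"
    unfolding fm_adj_def by simp
  also have "\<dots> = fm_mult m (fm_mult m (fm_adj W) (fm_adj G)) W j i"
    by (simp add: fm_adj_mult fm_mult_assoc)
  also have "\<dots> = fm_mult m (fm_mult m (fm_adj W) G) W j i"
    using assms unfolding fm_hermitian_def fm_adj_def
    by (intro fm_mult_cong_left fm_mult_cong_right) (metis complex_cnj_cnj)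
  finally show "fm_mult m (fm_mult m (fm_adj W) G) W j i = cnj (fm_mult m (fm_mult m (fm_adj W) G) W i j)"
    by simp
qed

lemma fm_hermitian_top_eigenvector:
  assumes h: "fm_hermitian (Suc n) G"
  obtains W lam where "fm_unitary (Suc n) W" "\<forall>i<Suc n. fm_mult (Suc n) G W i 0 = of_real lam * W i 0"
    "\<And>\<mu> x. fm_eigenvector (Suc n) G (of_real \<mu>) x \<Longrightarrow> \<mu> \<le> lam"
proof -
  let ?E = "{e. \<exists>x. fm_eigenvector (Suc n) G e x}"
  define lam where "lam = Max (Re ` ?E)"
  have E: "finite ?E" "?E \<noteq> {}" using fm_eigenvalues_finite_nonempty[of "Suc n" G] by auto
  then have "lam \<in> Re ` ?E" unfolding lam_def by (intro Max_in) auto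
  then obtain e x where ex: "fm_eigenvector (Suc n) G e x" "Re e = lam" by auto
  have e: "e = of_real lam"
    using fm_hermitian_eigenvalue_real[OF h ex(1)] ex(2)
    by (metis Reals_cnj_iff complex_is_Real_iff of_real_Re)
  obtain y r where y: "(\<Sum>k<Suc n. cnj (y k) * y k) = 1" "y 0 = of_real r"
    "\<forall>i<Suc n. (\<Sum>j<Suc n. G i j * y j) = of_real lam * y i"
    by (rule fm_eigenvector_normalize[OF ex(1)[unfolded e]])
  obtain W where W: "fm_unitary (Suc n) W" "\<forall>i<Suc n. W i 0 = y i"
    using fm_unitary_first_column[OF y(1) _ y(2)] by auto
  have "fm_mult (Suc n) G W i 0 = of_real lam * W i 0" if "i < Suc n" for i
    using W(2) y(3) that unfolding fm_mult_def by simp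
  moreover have "\<mu> \<le> lam" if "fm_eigenvector (Suc n) G (of_real \<mu>) x" for \<mu> x
  proof -
    have "Re (of_real \<mu>) \<in> Re ` ?E" using that by blast
    then show ?thesis unfolding lam_def using E(1) by (metis Max_ge Re_complex_of_real finite_imageI)
  qed
  ultimately show ?thesis using W(1) that by blast
qed

lemma fm_deflation:
  assumes h: "fm_hermitian (Suc n) G" and W: "fm_unitary (Suc n) W"
    and GW: "\<forall>i<Suc n. fm_mult (Suc n) G W i 0 = of_real lam * W i 0"
  defines "B \<equiv> fm_mult (Suc n) (fm_mult (Suc n) (fm_adj W) G) W"
  shows "fm_hermitian (Suc n) B"
    and "\<And>i. i < Suc n \<Longrightarrow> B i 0 = of_real lam * fm_id i 0"
    and "\<And>j. j < Suc n \<Longrightarrow> B 0 j = of_real lam * fm_id 0 j"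
proof -
  show hB: "fm_hermitian (Suc n) B" unfolding B_def by (rule fm_hermitian_conj[OF h])
  show B0: "B i 0 = of_real lam * fm_id i 0" if "i < Suc n" for i
  proof -
    have "B i 0 = fm_mult (Suc n) (fm_adj W) (fm_mult (Suc n) G W) i 0"
      unfolding B_def by (simp add: fm_mult_assoc)
    also have "\<dots> = fm_mult (Suc n) (fm_adj W) (\<lambda>k j. of_real lam * W k j) i 0"
      using GW by (intro fm_mult_cong_right) simp
    also have "\<dots> = of_real lam * fm_mult (Suc n) (fm_adj W) W i 0"
      unfolding fm_mult_def by (simp add: sum_distrib_left mult_ac del: sum.lessThan_Suc)
    also have "\<dots> = of_real lam * fm_id i 0" using W that unfolding fm_unitary_def by auto
    finally show ?thesis .
  qed
  show "B 0 j = of_real lam * fm_id 0 j" if "j < Suc n" for j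
  proof -
    have "B 0 j = cnj (B j 0)" using hB[unfolded fm_hermitian_def, rule_format, of j 0] that by simp
    then show ?thesis using B0[OF that] by (simp add: fm_id_def)
  qed
qed

definition fm_block1 :: "(nat \<Rightarrow> nat \<Rightarrow> complex) \<Rightarrow> nat \<Rightarrow> nat \<Rightarrow> complex" where
  "fm_block1 P = (\<lambda>i j. if i = 0 \<or> j = 0 then fm_id i j else P (i - 1) (j - 1))"

lemma fm_block1_simps [simp]:
  "fm_block1 P 0 j = fm_id 0 j" "fm_block1 P i 0 = fm_id i 0" "fm_block1 P (Suc i) (Suc j) = P i j"
  unfolding fm_block1_def by auto

lemma fm_mult_Suc: "fm_mult (Suc n) A B i j = A i 0 * B 0 j + (\<Sum>k<n. A i (Suc k) * B (Suc k) j)"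
  unfolding fm_mult_def by (rule sum.lessThan_Suc_shift)

lemma fm_unitary_block1:
  assumes "fm_unitary n P"
  shows "fm_unitary (Suc n) (fm_block1 P)"
  unfolding fm_unitary_def
proof (intro allI impI conjI)
  fix i j assume ij: "i < Suc n" "j < Suc n"
  show "fm_mult (Suc n) (fm_block1 P) (fm_adj (fm_block1 P)) i j = fm_id i j"
    using ij assms unfolding fm_mult_Suc
    by (cases i; cases j) (auto simp: fm_adj_def fm_unitary_def fm_mult_def)
  show "fm_mult (Suc n) (fm_adj (fm_block1 P)) (fm_block1 P) i j = fm_id i j"
    using ij assms unfolding fm_mult_Suc
    by (cases i; cases j) (auto simp: fm_adj_def fm_unitary_def fm_mult_def)
qed

lemma fm_eigenbasis_block1:
  assumes B0: "\<And>i. i < Suc n \<Longrightarrow> B i 0 = of_real lam * fm_id i 0"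
    "\<And>j. j < Suc n \<Longrightarrow> B 0 j = of_real lam * fm_id 0 j"
    and P: "fm_eigenbasis n (\<lambda>i j. B (Suc i) (Suc j)) P d"
  shows "fm_eigenbasis (Suc n) B (fm_block1 P) (\<lambda>j. if j = 0 then lam else d (j - 1))"
  unfolding fm_eigenbasis_def
proof (intro conjI allI impI)
  show "fm_unitary (Suc n) (fm_block1 P)"
    using P unfolding fm_eigenbasis_def by (simp add: fm_unitary_block1)
  fix i j assume ij: "i < Suc n" "j < Suc n"
  show "fm_mult (Suc n) B (fm_block1 P) i j = fm_block1 P i j * of_real (if j = 0 then lam else d (j - 1))"
  proof (cases j)
    case 0
    then show ?thesis using B0(1)[OF ij(1)] unfolding fm_mult_Suc by (simp add: mult.commute)
  next
    case (Suc j')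
    then have sum: "fm_mult (Suc n) B (fm_block1 P) i j = (\<Sum>k<n. B i (Suc k) * P k j')"
      unfolding fm_mult_Suc by simp
    show ?thesis
    proof (cases i)
      case 0
      then show ?thesis unfolding sum using B0(2) Suc by simp
    next
      case (Suc i')
      then show ?thesis
        unfolding sum using P ij \<open>j = Suc j'\<close> unfolding fm_eigenbasis_def fm_mult_def by simp
    qed
  qed
qed

lemma fm_eigenbasis_conj:
  assumes W: "fm_unitary n W" and Q: "fm_eigenbasis n (fm_mult n (fm_mult n (fm_adj W) G) W) Q d"
  shows "fm_eigenbasis n G (fm_mult n W Q) d"
  unfolding fm_eigenbasis_def
proof (intro conjI allI impI)
  show "fm_unitary n (fm_mult n W Q)"
    using W Q unfolding fm_eigenbasis_def by (simp add: fm_unitary_mult)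
  define B where "B = fm_mult n (fm_mult n (fm_adj W) G) W"
  have WB: "fm_mult n W B i k = fm_mult n G W i k" if "i < n" for i k
  proof -
    have "fm_mult n W B i k = fm_mult n (fm_mult n W (fm_adj W)) (fm_mult n G W) i k"
      unfolding B_def by (simp add: fm_mult_assoc)
    also have "\<dots> = fm_mult n fm_id (fm_mult n G W) i k"
      using W that unfolding fm_unitary_def by (intro fm_mult_cong_left) auto
    also have "\<dots> = fm_mult n G W i k" using that by (rule fm_mult_id_left)
    finally show ?thesis .
  qed
  fix i j assume ij: "i < n" "j < n"
  have "fm_mult n G (fm_mult n W Q) i j = fm_mult n (fm_mult n G W) Q i j"
    by (simp add: fm_mult_assoc)
  also have "\<dots> = fm_mult n (fm_mult n W B) Q i j"
    using WB ij by (intro fm_mult_cong_left) simp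
  also have "\<dots> = fm_mult n W (fm_mult n B Q) i j" by (simp add: fm_mult_assoc)
  also have "\<dots> = fm_mult n W (\<lambda>k j. of_real (d j) * Q k j) i j"
    using Q ij unfolding fm_eigenbasis_def B_def[symmetric]
    by (intro fm_mult_cong_right) (simp add: mult.commute)
  also have "\<dots> = fm_mult n W Q i j * of_real (d j)"
    unfolding fm_mult_def by (simp add: sum_distrib_left mult_ac)
  finally show "fm_mult n G (fm_mult n W Q) i j = fm_mult n W Q i j * of_real (d j)" .
qed

theorem fm_hermitian_spectral:
  "fm_hermitian n G \<Longrightarrow> \<exists>P d. fm_eigenbasis n G P d \<and> (\<forall>i j. i \<le> j \<longrightarrow> j < n \<longrightarrow> d j \<le> d i)"
proof (induction n arbitrary: G)
  case 0
  show ?case by (auto simp: fm_eigenbasis_def fm_unitary_def)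
next
  case (Suc n)
  obtain W lam where W: "fm_unitary (Suc n) W"
    and GW: "\<forall>i<Suc n. fm_mult (Suc n) G W i 0 = of_real lam * W i 0"
    and top: "\<And>\<mu> x. fm_eigenvector (Suc n) G (of_real \<mu>) x \<Longrightarrow> \<mu> \<le> lam"
    using fm_hermitian_top_eigenvector[OF Suc.prems] by metis
  define B where "B = fm_mult (Suc n) (fm_mult (Suc n) (fm_adj W) G) W"
  note B = fm_deflation[OF Suc.prems W GW, folded B_def]
  have "fm_hermitian n (\<lambda>i j. B (Suc i) (Suc j))"
    unfolding fm_hermitian_def
  proof (intro allI impI)
    fix i j assume "i < n" "j < n"
    then show "B (Suc j) (Suc i) = cnj (B (Suc i) (Suc j))"
      using B(1)[unfolded fm_hermitian_def, rule_format, of "Suc i" "Suc j"] by simp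
  qed
  from Suc.IH[OF this] obtain P d where P: "fm_eigenbasis n (\<lambda>i j. B (Suc i) (Suc j)) P d"
    and sorted: "\<forall>i j. i \<le> j \<longrightarrow> j < n \<longrightarrow> d j \<le> d i"
    by blast
  define d' where "d' j = (if j = 0 then lam else d (j - 1))" for j
  have "fm_eigenbasis (Suc n) B (fm_block1 P) d'"
    unfolding d'_def by (rule fm_eigenbasis_block1[OF B(2,3) P])
  from fm_eigenbasis_conj[OF W this[unfolded B_def]]
  have basis: "fm_eigenbasis (Suc n) G (fm_mult (Suc n) W (fm_block1 P)) d'" .
  have "d' j \<le> d' i" if "i \<le> j" "j < Suc n" for i j
  proof (cases i)
    case 0
    then show ?thesis using top[OF fm_eigenbasis_column[OF basis \<open>j < Suc n\<close>]] by (simp add: d'_def)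
  next
    case (Suc i')
    then show ?thesis using sorted that unfolding d'_def by (cases j) auto
  qed
  with basis show ?case by blast
qed

lemma idx_set_Nil: "idx_set [] = {[]}"
  unfolding idx_set_def by auto

lemma idx_set_Cons: "idx_set (d # ds) = (\<lambda>(j, js). j # js) ` ({..<d} \<times> idx_set ds)"
proof (intro equalityI subsetI)
  fix xs assume "xs \<in> idx_set (d # ds)"
  then have l: "length xs = Suc (length ds)" and b: "\<forall>k<Suc (length ds). xs ! k < (d # ds) ! k"
    unfolding idx_set_def by auto
  then obtain j js where xs: "xs = j # js" by (cases xs) auto
  have "j < d" using b xs by auto
  moreover have "js \<in> idx_set ds" unfolding idx_set_def
  proof (intro CollectI conjI allI impI)
    show "length js = length ds" using l xs by simp
    fix k assume "k < length ds"
    then show "js ! k < ds ! k" using b xs by (metis Suc_less_eq nth_Cons_Suc)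
  qed
  ultimately show "xs \<in> (\<lambda>(j, js). j # js) ` ({..<d} \<times> idx_set ds)" using xs by force
next
  fix xs assume "xs \<in> (\<lambda>(j, js). j # js) ` ({..<d} \<times> idx_set ds)"
  then show "xs \<in> idx_set (d # ds)" unfolding idx_set_def by (auto simp: less_Suc_eq_0_disj)
qed

lemma finite_idx_set: "finite (idx_set dims)"
  by (induction dims) (auto simp: idx_set_Nil idx_set_Cons)

lemma idx_set_length: "xs \<in> idx_set dims \<Longrightarrow> length xs = length dims"
  unfolding idx_set_def by auto

lemma idx_set_nth: "xs \<in> idx_set dims \<Longrightarrow> k < length dims \<Longrightarrow> xs ! k < dims ! k"
  unfolding idx_set_def by auto

lemma idx_set_update: "xs \<in> idx_set dims \<Longrightarrow> i < dims ! n \<Longrightarrow> xs[n := i] \<in> idx_set dims"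
  unfolding idx_set_def by (auto simp: nth_list_update split: if_split_asm) (metis nth_list_update_eq nth_list_update_neq)

lemma sum_idx_set_prod:
  fixes f :: "nat \<Rightarrow> nat \<Rightarrow> 'a::comm_semiring_1"
  shows "(\<Sum>js\<in>idx_set dims. \<Prod>m<length dims. f m (js ! m)) = (\<Prod>m<length dims. \<Sum>j<dims ! m. f m j)"
proof (induction dims arbitrary: f)
  case Nil
  show ?case by (simp add: idx_set_Nil)
next
  case (Cons d ds)
  have inj: "inj_on (\<lambda>(j, js). j # js) ({..<d} \<times> idx_set ds)"
    by (auto simp: inj_on_def)
  have "(\<Sum>js\<in>idx_set (d # ds). \<Prod>m<length (d # ds). f m (js ! m))
      = (\<Sum>(j, js)\<in>{..<d} \<times> idx_set ds. f 0 j * (\<Prod>m<length ds. f (Suc m) (js ! m)))"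
    unfolding idx_set_Cons sum.reindex[OF inj]
    by (simp add: case_prod_unfold prod.lessThan_Suc_shift del: prod.lessThan_Suc)
  also have "\<dots> = (\<Sum>j<d. f 0 j) * (\<Sum>js\<in>idx_set ds. \<Prod>m<length ds. f (Suc m) (js ! m))"
    by (simp add: sum.cartesian_product[symmetric] sum_product)
  also have "\<dots> = (\<Prod>m<length (d # ds). \<Sum>j<(d # ds) ! m. f m j)"
    unfolding Cons.IH[of "\<lambda>m. f (Suc m)"] by (simp add: prod.lessThan_Suc_shift del: prod.lessThan_Suc)
  finally show ?case .
qed

lemma sum_idx_set_slice_prod:
  fixes f :: "nat \<Rightarrow> nat \<Rightarrow> 'a::comm_semiring_1"
  assumes n: "n < length dims" and a: "a < dims ! n"
  shows "(\<Sum>js\<in>{js\<in>idx_set dims. js ! n = a}. \<Prod>m<length dims. f m (js ! m))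
       = f n a * (\<Prod>m\<in>{..<length dims} - {n}. \<Sum>j<dims ! m. f m j)"
proof -
  define g where "g m j = (if m = n then (if j = a then f m j else 0) else f m j)" for m j
  have "(if js ! n = a then \<Prod>m<length dims. f m (js ! m) else 0) = (\<Prod>m<length dims. g m (js ! m))" for js
    using n by (auto simp: g_def intro!: prod.cong prod_zero bexI[of _ n])
  then have "(\<Sum>js\<in>{js\<in>idx_set dims. js ! n = a}. \<Prod>m<length dims. f m (js ! m))
      = (\<Sum>js\<in>idx_set dims. \<Prod>m<length dims. g m (js ! m))"
    unfolding sum.inter_filter[OF finite_idx_set] by simp
  also have "\<dots> = (\<Sum>j<dims ! n. g n j) * (\<Prod>m\<in>{..<length dims} - {n}. \<Sum>j<dims ! m. g m j)"
    unfolding sum_idx_set_prod using n by (simp add: prod.remove)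
  also have "\<dots> = f n a * (\<Prod>m\<in>{..<length dims} - {n}. \<Sum>j<dims ! m. f m j)"
    using a by (simp add: g_def)
  finally show ?thesis .
qed

lemma sum_idx_set_kronecker:
  assumes js: "js \<in> idx_set dims" and n: "n < length dims"
  shows "(\<Sum>ks\<in>idx_set dims. g ks * (\<Prod>m\<in>{..<length dims} - {n}. fm_id (js ! m) (ks ! m)))
       = (\<Sum>k<dims ! n. g (js[n := k]))"
proof -
  let ?S = "(\<lambda>k. js[n := k]) ` {..<dims ! n}"
  have lj: "length js = length dims" using js by (rule idx_set_length)
  have "(\<Prod>m\<in>{..<length dims} - {n}. fm_id (js ! m) (ks ! m)) = 0"
    if ks: "ks \<in> idx_set dims - ?S" for ks
  proof -
    have lk: "length ks = length dims" using ks idx_set_length by blast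
    have "\<exists>m\<in>{..<length dims} - {n}. js ! m \<noteq> ks ! m"
    proof (rule ccontr)
      assume "\<not> ?thesis"
      then have "ks = js[n := ks ! n]"
        using lk lj n by (intro nth_equalityI) (auto simp: nth_list_update)
      moreover have "ks ! n < dims ! n" using ks n idx_set_nth by blast
      ultimately show False using ks by blast
    qed
    then show ?thesis by (intro prod_zero) (auto simp: fm_id_def)
  qed
  moreover have "(\<Prod>m\<in>{..<length dims} - {n}. fm_id (js ! m) (ks ! m)) = 1" if "ks \<in> ?S" for ks
    using that lj n by (auto intro!: prod.neutral simp: fm_id_def nth_list_update split: if_split_asm)
  ultimately have "(\<Sum>ks\<in>idx_set dims. g ks * (\<Prod>m\<in>{..<length dims} - {n}. fm_id (js ! m) (ks ! m)))
      = (\<Sum>ks\<in>?S. g ks)"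
    using idx_set_update[OF js] by (intro sum.mono_neutral_cong_right[OF finite_idx_set]) auto
  also have "\<dots> = (\<Sum>k<dims ! n. g (js[n := k]))"
    using n lj by (intro sum.reindex_cong[where l="\<lambda>k. js[n := k]"]) (auto simp: inj_on_def dest: arg_cong[where f="\<lambda>xs. xs ! n"])
  finally show ?thesis .
qed

lemma sum_idx_set_group:
  "n < length dims \<Longrightarrow> (\<Sum>xs\<in>idx_set dims. f xs) = (\<Sum>j<dims ! n. \<Sum>xs\<in>{xs\<in>idx_set dims. xs ! n = j}. f xs)"
  by (rule sum.group[symmetric]) (auto simp: finite_idx_set idx_set_nth)

definition mtransform :: "nat list \<Rightarrow> (nat list \<Rightarrow> complex) \<Rightarrow> (nat \<Rightarrow> nat \<Rightarrow> nat \<Rightarrow> complex) \<Rightarrow> nat list \<Rightarrow> complex" where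
  "mtransform dims T M xs = (\<Sum>js\<in>idx_set dims. T js * (\<Prod>m<length dims. M m (xs ! m) (js ! m)))"

lemma mtransform_id: "xs \<in> idx_set dims \<Longrightarrow> mtransform dims T (\<lambda>m. fm_id) xs = T xs"
proof -
  assume xs: "xs \<in> idx_set dims"
  have "T js * (\<Prod>m<length dims. fm_id (xs ! m) (js ! m)) = (if js = xs then T js else 0)"
    if js: "js \<in> idx_set dims" for js
  proof (cases "js = xs")
    case False
    then obtain m where "m < length dims" "xs ! m \<noteq> js ! m"
      using idx_set_length[OF xs] idx_set_length[OF js] by (metis nth_equalityI)
    then have "(\<Prod>m<length dims. fm_id (xs ! m) (js ! m)) = 0"
      by (intro prod_zero) (auto simp: fm_id_def)
    with False show ?thesis by simp
  qed simp
  then show ?thesis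
    unfolding mtransform_def using xs by (simp add: finite_idx_set cong: sum.cong)
qed

lemma mtransform_cong:
  assumes "\<And>n i j. n < length dims \<Longrightarrow> i < dims ! n \<Longrightarrow> j < dims ! n \<Longrightarrow> M n i j = M' n i j"
    and "xs \<in> idx_set dims"
  shows "mtransform dims T M xs = mtransform dims T M' xs"
  unfolding mtransform_def
  by (intro sum.cong refl arg_cong2[where f="(*)"] prod.cong) (auto intro!: assms idx_set_nth)

lemma mtransform_comp:
  "mtransform dims (mtransform dims T M) M' xs = mtransform dims T (\<lambda>n. fm_mult (dims ! n) (M' n) (M n)) xs"
proof -
  have "mtransform dims (mtransform dims T M) M' xs
     = (\<Sum>ks\<in>idx_set dims. T ks * (\<Sum>js\<in>idx_set dims. \<Prod>m<length dims. M' m (xs ! m) (js ! m) * M m (js ! m) (ks ! m)))"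
    unfolding mtransform_def sum_distrib_right sum_distrib_left
    by (subst sum.swap) (simp add: prod.distrib mult_ac)
  then show ?thesis
    unfolding mtransform_def fm_mult_def sum_idx_set_prod[where f="\<lambda>m j. M' m (xs ! m) j * M m j (_ ! m)"] .
qed

lemma mtransform_adj_inverse:
  assumes V: "\<And>m. m < length dims \<Longrightarrow> fm_unitary (dims ! m) (V m)" and xs: "xs \<in> idx_set dims"
  shows "mtransform dims (mtransform dims A (\<lambda>m. fm_adj (V m))) V xs = A xs"
proof -
  have "mtransform dims (mtransform dims A (\<lambda>m. fm_adj (V m))) V xs
      = mtransform dims A (\<lambda>m. fm_id) xs"
    unfolding mtransform_comp using V by (intro mtransform_cong[OF _ xs]) (simp add: fm_unitary_def)
  then show ?thesis using mtransform_id[OF xs] by simp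
qed

definition cmode_prod :: "nat list \<Rightarrow> (nat list \<Rightarrow> complex) \<Rightarrow> nat \<Rightarrow> (nat \<Rightarrow> nat \<Rightarrow> complex) \<Rightarrow> nat list \<Rightarrow> complex" where
  "cmode_prod dims T n U = (\<lambda>xs. \<Sum>i<dims ! n. T (xs[n := i]) * U (xs ! n) i)"

definition cmulti_mode_prod :: "nat list \<Rightarrow> (nat list \<Rightarrow> complex) \<Rightarrow> (nat \<Rightarrow> nat \<Rightarrow> nat \<Rightarrow> complex) \<Rightarrow> nat \<Rightarrow> nat list \<Rightarrow> complex" where
  "cmulti_mode_prod dims T Us k = foldl (\<lambda>T n. cmode_prod dims T n (Us n)) T [0..<k]"

lemma cmode_prod_mtransform:
  assumes k: "k < length dims" and xs: "xs \<in> idx_set dims"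
  shows "cmode_prod dims (mtransform dims T M) k U xs = mtransform dims T (M(k := fm_mult (dims ! k) U (M k))) xs"
proof -
  let ?R = "\<lambda>js. \<Prod>m\<in>{..<length dims} - {k}. M m (xs ! m) (js ! m)"
  have lx: "length xs = length dims" using xs by (rule idx_set_length)
  have "(\<Prod>m<length dims. M m (xs[k := i] ! m) (js ! m)) = M k i (js ! k) * ?R js" for i js
    using k lx by (subst prod.remove[of _ k]) (auto intro!: prod.cong simp: nth_list_update)
  then have "cmode_prod dims (mtransform dims T M) k U xs
      = (\<Sum>js\<in>idx_set dims. T js * fm_mult (dims ! k) U (M k) (xs ! k) (js ! k) * ?R js)"
    unfolding cmode_prod_def mtransform_def fm_mult_def sum_distrib_right sum_distrib_left
    by (subst sum.swap) (simp add: mult_ac)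
  also have "\<dots> = mtransform dims T (M(k := fm_mult (dims ! k) U (M k))) xs"
    unfolding mtransform_def using k by (subst (2) prod.remove[of _ k]) (auto intro!: sum.cong prod.cong)
  finally show ?thesis .
qed

lemma cmulti_mode_prod_eq_mtransform:
  assumes "k \<le> length dims" "xs \<in> idx_set dims"
  shows "cmulti_mode_prod dims T Us k xs = mtransform dims T (\<lambda>m. if m < k then Us m else fm_id) xs"
  using assms
proof (induction k arbitrary: xs)
  case 0
  then show ?case by (simp add: cmulti_mode_prod_def mtransform_id)
next
  case (Suc k)
  have "cmulti_mode_prod dims T Us (Suc k) xs = cmode_prod dims (cmulti_mode_prod dims T Us k) k (Us k) xs"
    by (simp add: cmulti_mode_prod_def)
  also have "\<dots> = cmode_prod dims (mtransform dims T (\<lambda>m. if m < k then Us m else fm_id)) k (Us k) xs"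
    using Suc by (auto simp: cmode_prod_def idx_set_update intro!: sum.cong)
  also have "\<dots> = mtransform dims T (\<lambda>m. if m < Suc k then Us m else fm_id) xs"
    using Suc.prems by (simp add: cmode_prod_mtransform) (auto intro!: mtransform_cong simp: fm_mult_id_right)
  finally show ?case .
qed

text \<open>Entry \<open>(a, b)\<close> of the conjugate of the Gram matrix of the mode-\<open>n\<close> unfolding.\<close>
definition mode_gram :: "nat list \<Rightarrow> (nat list \<Rightarrow> complex) \<Rightarrow> nat \<Rightarrow> nat \<Rightarrow> nat \<Rightarrow> complex" where
  "mode_gram dims T n a b = (\<Sum>xs\<in>{xs\<in>idx_set dims. xs ! n = a}. cnj (T xs) * T (xs[n := b]))"

lemma mode_gram_diag: "mode_gram dims T n a a = of_real (\<Sum>xs\<in>{xs\<in>idx_set dims. xs ! n = a}. (cmod (T xs))\<^sup>2)"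
  unfolding mode_gram_def sum_cnj_mult_self[symmetric] by (intro sum.cong refl) auto

lemma mode_gram_hermitian:
  assumes n: "n < length dims"
  shows "fm_hermitian (dims ! n) (mode_gram dims T n)"
  unfolding fm_hermitian_def
proof (intro allI impI)
  fix j k assume j: "j < dims ! n" and k: "k < dims ! n"
  let ?A = "{xs\<in>idx_set dims. xs ! n = j}" and ?B = "{xs\<in>idx_set dims. xs ! n = k}"
  have len: "xs \<in> idx_set dims \<Longrightarrow> length xs = length dims" for xs by (rule idx_set_length)
  have bij: "bij_betw (\<lambda>ys. ys[n := j]) ?B ?A"
  proof (rule bij_betw_byWitness[where f'="\<lambda>ys. ys[n := k]"])
    show "(\<lambda>ys. ys[n := j]) ` ?B \<subseteq> ?A" "(\<lambda>ys. ys[n := k]) ` ?A \<subseteq> ?B"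
      using idx_set_update j k n len by auto
  qed auto
  have "cnj (mode_gram dims T n j k) = (\<Sum>xs\<in>?A. T xs * cnj (T (xs[n := k])))"
    unfolding mode_gram_def by (simp add: mult.commute)
  also have "\<dots> = (\<Sum>ys\<in>?B. cnj (T ys) * T (ys[n := j]))"
    by (subst sum.reindex_bij_betw[OF bij, symmetric]) (auto intro!: sum.cong simp: mult.commute)
  finally show "mode_gram dims T n k j = cnj (mode_gram dims T n j k)"
    unfolding mode_gram_def by simp
qed

lemma sum_slice_prod_unitary:
  assumes n: "n < length dims" and a: "a < dims ! n"
    and U: "\<And>m. m < length dims \<Longrightarrow> m \<noteq> n \<Longrightarrow> fm_unitary (dims ! m) (M m)"
    and js: "js \<in> idx_set dims" and ks: "ks \<in> idx_set dims"
  shows "(\<Sum>xs\<in>{xs\<in>idx_set dims. xs ! n = a}.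
           \<Prod>m<length dims. cnj (M m (xs ! m) (js ! m)) * M m (if m = n then b else xs ! m) (ks ! m))
       = cnj (M n a (js ! n)) * M n b (ks ! n) * (\<Prod>m\<in>{..<length dims} - {n}. fm_id (js ! m) (ks ! m))"
proof -
  have "(\<Sum>i<dims ! m. cnj (M m i (js ! m)) * M m i (ks ! m)) = fm_id (js ! m) (ks ! m)"
    if "m \<in> {..<length dims} - {n}" for m
    using that U fm_unitary_cols idx_set_nth[OF js] idx_set_nth[OF ks] by auto
  then have "(\<Prod>m\<in>{..<length dims} - {n}.
      \<Sum>i<dims ! m. cnj (M m i (js ! m)) * M m (if m = n then b else i) (ks ! m))
      = (\<Prod>m\<in>{..<length dims} - {n}. fm_id (js ! m) (ks ! m))"
    by (intro prod.cong refl) auto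
  then show ?thesis
    unfolding sum_idx_set_slice_prod[OF n a,
        where f="\<lambda>m i. cnj (M m i (js ! m)) * M m (if m = n then b else i) (ks ! m)"]
    by simp
qed

lemma mode_gram_mtransform:
  assumes n: "n < length dims" and a: "a < dims ! n" and b: "b < dims ! n"
    and U: "\<And>m. m < length dims \<Longrightarrow> m \<noteq> n \<Longrightarrow> fm_unitary (dims ! m) (M m)"
  shows "mode_gram dims (mtransform dims T M) n a b
       = (\<Sum>j<dims ! n. \<Sum>k<dims ! n. cnj (M n a j) * M n b k * mode_gram dims T n j k)"
proof -
  let ?N = "length dims" and ?I = "idx_set dims"
  let ?R = "\<lambda>js ks. \<Prod>m\<in>{..<?N} - {n}. fm_id (js ! m) (ks ! m)"
  let ?P = "\<lambda>xs js ks. \<Prod>m<?N. cnj (M m (xs ! m) (js ! m)) * M m (if m = n then b else xs ! m) (ks ! m)"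
  have "mode_gram dims (mtransform dims T M) n a b
      = (\<Sum>xs\<in>{xs\<in>?I. xs ! n = a}. \<Sum>js\<in>?I. \<Sum>ks\<in>?I. cnj (T js) * T ks * ?P xs js ks)"
    unfolding mode_gram_def mtransform_def
  proof (intro sum.cong refl)
    fix xs assume "xs \<in> {xs\<in>?I. xs ! n = a}"
    then have "(\<Prod>m<?N. M m (xs[n := b] ! m) (ks ! m)) = (\<Prod>m<?N. M m (if m = n then b else xs ! m) (ks ! m))"
      for ks using idx_set_length[of xs dims] by (auto intro!: prod.cong simp: nth_list_update)
    then show "cnj (\<Sum>js\<in>?I. T js * (\<Prod>m<?N. M m (xs ! m) (js ! m)))
        * (\<Sum>ks\<in>?I. T ks * (\<Prod>m<?N. M m (xs[n := b] ! m) (ks ! m)))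
      = (\<Sum>js\<in>?I. \<Sum>ks\<in>?I. cnj (T js) * T ks * ?P xs js ks)"
      unfolding cnj_sum sum_product by (simp add: prod.distrib mult_ac)
  qed
  also have "\<dots> = (\<Sum>js\<in>?I. \<Sum>ks\<in>?I. \<Sum>xs\<in>{xs\<in>?I. xs ! n = a}. cnj (T js) * T ks * ?P xs js ks)"
    by (subst sum.swap) (intro sum.cong refl sum.swap)
  also have "\<dots> = (\<Sum>js\<in>?I. \<Sum>ks\<in>?I. cnj (T js) * cnj (M n a (js ! n)) * ((T ks * M n b (ks ! n)) * ?R js ks))"
    by (intro sum.cong refl)
      (simp add: sum_slice_prod_unitary[OF n a U] flip: sum_distrib_left)
  also have "\<dots> = (\<Sum>js\<in>?I. cnj (T js) * cnj (M n a (js ! n)) * (\<Sum>k<dims ! n. T (js[n := k]) * M n b k))"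
    using n by (simp add: sum_distrib_left[symmetric] sum_idx_set_kronecker idx_set_length cong: sum.cong)
  also have "\<dots> = (\<Sum>j<dims ! n. \<Sum>k<dims ! n. cnj (M n a j) * M n b k * mode_gram dims T n j k)"
    unfolding sum_idx_set_group[OF n] mode_gram_def
    by (intro sum.cong refl) (auto simp: sum_distrib_left sum_distrib_right mult_ac intro: sum.swap)
  finally show ?thesis .
qed

lemma fm_unitary_transpose:
  assumes "fm_unitary n P"
  shows "fm_unitary n (\<lambda>i j. P j i)"
proof -
  have "fm_adj (\<lambda>i j. cnj (P i j)) = (\<lambda>i j. P j i)" by (simp add: fm_adj_def)
  then show ?thesis using fm_unitary_adj[OF fm_unitary_cnj[OF assms]] by simp
qed

lemma mode_gram_core_diagonal:
  assumes n: "n < length dims" and a: "a < dims ! n" and b: "b < dims ! n"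
    and P: "\<And>m. m < length dims \<Longrightarrow> fm_unitary (dims ! m) (P m)"
    and eig: "fm_eigenbasis (dims ! n) (mode_gram dims A n) (P n) d"
  shows "mode_gram dims (mtransform dims A (\<lambda>m i j. P m j i)) n a b = (if a = b then of_real (d b) else 0)"
proof -
  have "mode_gram dims (mtransform dims A (\<lambda>m i j. P m j i)) n a b
      = (\<Sum>j<dims ! n. \<Sum>k<dims ! n. cnj (P n j a) * P n k b * mode_gram dims A n j k)"
    using P fm_unitary_transpose by (intro mode_gram_mtransform[OF n a b]) blast
  also have "\<dots> = (\<Sum>j<dims ! n. cnj (P n j a) * fm_mult (dims ! n) (mode_gram dims A n) (P n) j b)"
    unfolding fm_mult_def by (simp add: sum_distrib_left mult_ac)
  also have "\<dots> = (\<Sum>j<dims ! n. cnj (P n j a) * P n j b) * of_real (d b)"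
    using eig b unfolding fm_eigenbasis_def by (simp add: sum_distrib_left sum_distrib_right mult_ac)
  also have "\<dots> = fm_id a b * of_real (d b)"
    using fm_unitary_cols[OF P[OF n] a b] by simp
  finally show ?thesis by (simp add: fm_id_def)
qed

definition is_hosvd :: "nat list \<Rightarrow> (nat list \<Rightarrow> complex) \<Rightarrow> (nat list \<Rightarrow> complex) \<Rightarrow> (nat \<Rightarrow> nat \<Rightarrow> nat \<Rightarrow> complex) \<Rightarrow> bool" where
  "is_hosvd dims A S U \<longleftrightarrow> (\<forall>n<length dims. fm_unitary (dims ! n) (U n))
     \<and> (\<forall>xs\<in>idx_set dims. A xs = cmulti_mode_prod dims S U (length dims) xs)
     \<and> (\<forall>n<length dims. \<forall>a<dims ! n. \<forall>b<dims ! n. a \<noteq> b \<longrightarrow> mode_gram dims S n a b = 0)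
     \<and> (\<forall>n<length dims. \<forall>a b. a \<le> b \<longrightarrow> b < dims ! n \<longrightarrow>
          Re (mode_gram dims S n b b) \<le> Re (mode_gram dims S n a a))"

theorem complex_hosvd_exists: "\<exists>S U. is_hosvd dims A S U"
proof -
  let ?N = "length dims"
  have "\<exists>P d. fm_eigenbasis (dims ! n) (mode_gram dims A n) P d
      \<and> (\<forall>i j. i \<le> j \<longrightarrow> j < dims ! n \<longrightarrow> d j \<le> d i)" if "n < ?N" for n
    by (rule fm_hermitian_spectral[OF mode_gram_hermitian[OF that]])
  then obtain P d where eig: "\<And>n. n < ?N \<Longrightarrow> fm_eigenbasis (dims ! n) (mode_gram dims A n) (P n) (d n)"
    and sorted: "\<And>n i j. n < ?N \<Longrightarrow> i \<le> j \<Longrightarrow> j < dims ! n \<Longrightarrow> d n j \<le> d n i"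
    by metis
  have P: "fm_unitary (dims ! n) (P n)" if "n < ?N" for n
    using eig[OF that] unfolding fm_eigenbasis_def by blast
  define U where "U n i j = cnj (P n i j)" for n i j
  define S where "S = mtransform dims A (\<lambda>m. fm_adj (U m))"
  have U: "fm_unitary (dims ! n) (U n)" if "n < ?N" for n
    unfolding U_def using P[OF that] by (rule fm_unitary_cnj)
  have "A xs = cmulti_mode_prod dims S U ?N xs" if xs: "xs \<in> idx_set dims" for xs
  proof -
    have "cmulti_mode_prod dims S U ?N xs = mtransform dims S U xs"
      unfolding cmulti_mode_prod_eq_mtransform[OF le_refl xs] by (rule mtransform_cong[OF _ xs]) simp
    then show ?thesis unfolding S_def using mtransform_adj_inverse[OF U xs] by simp
  qed
  moreover have "mode_gram dims S n a b = (if a = b then of_real (d n b) else 0)"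
    if "n < ?N" "a < dims ! n" "b < dims ! n" for n a b
    unfolding S_def U_def fm_adj_def using that P eig
    by (simp add: mode_gram_core_diagonal)
  ultimately show ?thesis
    unfolding is_hosvd_def using U sorted by (intro exI[of _ S] exI[of _ U]) auto
qed

lemma matrix_inv_apply:
  fixes L :: "'a::comm_semiring_1^'n^'n"
  assumes "invertible L"
  shows "L *v (matrix_inv L *v x) = x" "matrix_inv L *v (L *v x) = x"
proof -
  have "\<exists>L'. L ** L' = Finite_Cartesian_Product.mat 1 \<and> L' ** L = Finite_Cartesian_Product.mat 1"
    using assms unfolding invertible_def .
  from someI_ex[OF this] show "L *v (matrix_inv L *v x) = x" "matrix_inv L *v (L *v x) = x"
    unfolding matrix_inv_def by (auto simp: matrix_vector_mul_assoc)
qed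

lemma invertible_vec_eqI:
  fixes L :: "'a::comm_semiring_1^'n^'n"
  assumes "invertible L" "\<And>k. (L *v a) $ k = (L *v b) $ k"
  shows "a = b"
  using matrix_inv_apply(2)[OF assms(1)] assms(2)
  by (metis Finite_Cartesian_Product.vec_eq_iff)

lemma matrix_vector_mult_sum_nth: "(L *v (\<Sum>i\<in>I. f i)) $ k = (\<Sum>i\<in>I. (L *v f i) $ k)"
  by (induction I rule: infinite_finite_induct) (auto simp: matrix_vector_right_distrib)

context
  fixes L :: "complex^'p::finite^'p"
  assumes L: "invertible L"
begin

lemma transform_tprod: "(L *v tprod L a b) $ k = (L *v a) $ k * (L *v b) $ k"
  unfolding tprod_def by (simp add: matrix_inv_apply[OF L])

lemma transform_tconj: "(L *v tconj L a) $ k = cnj ((L *v a) $ k)"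
  unfolding tconj_def by (simp add: matrix_inv_apply[OF L])

lemma transform_tmat_mult: "(L *v tmat_mult L J A B i j) $ k = (\<Sum>l<J. (L *v A i l) $ k * (L *v B l j) $ k)"
  unfolding tmat_mult_def by (simp add: matrix_vector_mult_sum_nth transform_tprod)

lemma transform_tmat_herm: "(L *v tmat_herm L A i j) $ k = cnj ((L *v A j i) $ k)"
  unfolding tmat_herm_def by (simp add: transform_tconj)

lemma transform_tmat_id: "(L *v tmat_id L i j) $ k = fm_id i j"
  unfolding tmat_id_def fm_id_def by (simp add: matrix_inv_apply[OF L])

lemma transform_mode_prod_fold:
  "(L *v foldl (\<lambda>T n. mode_prod L dims T n (Us n)) T ns xs) $ k
     = foldl (\<lambda>T n. cmode_prod dims T n (\<lambda>i j. (L *v Us n i j) $ k)) (\<lambda>xs. (L *v T xs) $ k) ns xs"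
proof (induction ns arbitrary: T)
  case (Cons n ns)
  have "(\<lambda>xs. (L *v mode_prod L dims T n (Us n) xs) $ k)
      = cmode_prod dims (\<lambda>xs. (L *v T xs) $ k) n (\<lambda>i j. (L *v Us n i j) $ k)"
    unfolding mode_prod_def cmode_prod_def by (simp add: matrix_vector_mult_sum_nth transform_tprod)
  then show ?case using Cons.IH[of "mode_prod L dims T n (Us n)"] by simp
qed simp

lemma transform_multi_mode_prod:
  "(L *v multi_mode_prod L dims S Us xs) $ k
     = cmulti_mode_prod dims (\<lambda>xs. (L *v S xs) $ k) (\<lambda>n i j. (L *v Us n i j) $ k) (length dims) xs"
  unfolding multi_mode_prod_def cmulti_mode_prod_def transform_mode_prod_fold ..

lemma tunitary_if_transform_unitary:
  assumes "\<And>k. fm_unitary n (\<lambda>i j. (L *v U i j) $ k)"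
  shows "tunitary L n U"
  unfolding tunitary_def
proof (intro allI impI conjI)
  fix i j assume "i < n" "j < n"
  then show "tmat_mult L n U (tmat_herm L U) i j = tmat_id L i j"
    and "tmat_mult L n (tmat_herm L U) U i j = tmat_id L i j"
    using fm_unitary_rows[OF assms] fm_unitary_cols[OF assms]
    by (auto intro!: invertible_vec_eqI[OF L]
        simp: transform_tmat_mult transform_tmat_herm transform_tmat_id)
qed

lemma all_orthogonal_if_transform_orthogonal:
  assumes "\<And>k n a b. n < length dims \<Longrightarrow> a < dims ! n \<Longrightarrow> b < dims ! n \<Longrightarrow> a \<noteq> b \<Longrightarrow>
      mode_gram dims (\<lambda>xs. (L *v S xs) $ k) n a b = 0"
  shows "all_orthogonal L dims S"
  unfolding all_orthogonal_def
proof (intro allI impI)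
  fix n a b assume "n < length dims" "a < dims ! n" "b < dims ! n" "a \<noteq> b"
  then show "(\<Sum>xs\<in>{xs\<in>idx_set dims. xs ! n = a}. tprod L (tconj L (S xs)) (S (xs[n := b]))) = 0"
    using assms by (intro invertible_vec_eqI[OF L])
      (simp add: matrix_vector_mult_sum_nth transform_tprod transform_tconj mode_gram_def)
qed

end

lemma slice_norm_eq_mode_gram:
  "slice_norm dims T n a = sqrt (\<Sum>k\<in>UNIV. Re (mode_gram dims (\<lambda>xs. T xs $ k) n a a))"
  unfolding slice_norm_def mode_gram_diag Re_complex_of_real by (subst sum.swap) (rule refl)

lemma ordered_slices_if_components_ordered:
  assumes "\<And>k n a b. n < length dims \<Longrightarrow> a \<le> b \<Longrightarrow> b < dims ! n \<Longrightarrow>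
      Re (mode_gram dims (\<lambda>xs. T xs $ k) n b b) \<le> Re (mode_gram dims (\<lambda>xs. T xs $ k) n a a)"
  shows "ordered_slices dims T"
  unfolding ordered_slices_def slice_norm_eq_mode_gram
  using assms by (auto intro!: real_sqrt_le_mono sum_mono)

theorem tubal_hosvd_transform_ordered:
  fixes L :: "complex^('p::finite)^'p" and A :: "nat list \<Rightarrow> complex^'p"
  assumes L: "invertible L"
  shows "\<exists>S Us. (\<forall>n<length dims. tunitary L (dims!n) (Us n))
     \<and> all_orthogonal L dims S
     \<and> (\<forall>xs\<in>idx_set dims. A xs = multi_mode_prod L dims S Us xs)
     \<and> ordered_slices dims (\<lambda>xs. L *v S xs)"
proof -
  let ?N = "length dims"
  have "\<forall>k. \<exists>S U. is_hosvd dims (\<lambda>xs. (L *v A xs) $ k) S U"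
    by (intro allI complex_hosvd_exists)
  from choice[OF this] obtain Sk where "\<forall>k. \<exists>U. is_hosvd dims (\<lambda>xs. (L *v A xs) $ k) (Sk k) U" ..
  from choice[OF this] obtain Uk where "\<forall>k. is_hosvd dims (\<lambda>xs. (L *v A xs) $ k) (Sk k) (Uk k)" ..
  then have U: "\<And>k n. n < ?N \<Longrightarrow> fm_unitary (dims ! n) (Uk k n)"
    and rec: "\<And>k xs. xs \<in> idx_set dims \<Longrightarrow> (L *v A xs) $ k = cmulti_mode_prod dims (Sk k) (Uk k) ?N xs"
    and orth: "\<And>k n a b. n < ?N \<Longrightarrow> a < dims ! n \<Longrightarrow> b < dims ! n \<Longrightarrow> a \<noteq> b \<Longrightarrow>
        mode_gram dims (Sk k) n a b = 0"
    and ord: "\<And>k n a b. n < ?N \<Longrightarrow> a \<le> b \<Longrightarrow> b < dims ! n \<Longrightarrow>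
        Re (mode_gram dims (Sk k) n b b) \<le> Re (mode_gram dims (Sk k) n a a)"
    unfolding is_hosvd_def by simp_all
  define S where "S xs = matrix_inv L *v (\<chi> k. Sk k xs)" for xs
  define Us where "Us n i j = matrix_inv L *v (\<chi> k. Uk k n i j)" for n i j
  have LS: "(\<lambda>xs. (L *v S xs) $ k) = Sk k" for k
    unfolding S_def by (simp add: matrix_inv_apply[OF L])
  have LU: "(\<lambda>i j. (L *v Us n i j) $ k) = Uk k n" for n k
    unfolding Us_def by (simp add: matrix_inv_apply[OF L])
  have "tunitary L (dims ! n) (Us n)" if "n < ?N" for n
    using U[OF that] by (intro tunitary_if_transform_unitary[OF L]) (simp add: LU)
  moreover have "all_orthogonal L dims S"
    using orth by (intro all_orthogonal_if_transform_orthogonal[OF L]) (simp add: LS)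
  moreover have "A xs = multi_mode_prod L dims S Us xs" if "xs \<in> idx_set dims" for xs
    using rec[OF that] by (intro invertible_vec_eqI[OF L]) (simp add: transform_multi_mode_prod[OF L] LS LU)
  moreover have "ordered_slices dims (\<lambda>xs. L *v S xs)"
    using ord by (intro ordered_slices_if_components_ordered) (simp add: LS)
  ultimately show ?thesis by blast
qed

lemma cmat_unitary_sum_cmod_sq:
  fixes W :: "complex^'p::finite^'p"
  assumes "cmat_unitary W"
  shows "(\<Sum>k\<in>UNIV. (cmod ((W *v v) $ k))\<^sup>2) = (\<Sum>k\<in>UNIV. (cmod (v $ k))\<^sup>2)"
proof -
  define Wh where "Wh = (\<chi> i j. cnj (W $ j $ i))"
  have WW: "Wh ** W = Finite_Cartesian_Product.mat 1"
    using assms unfolding cmat_unitary_def Wh_def Let_def by simp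
  have col: "(\<Sum>k\<in>UNIV. cnj (W $ k $ i) * W $ k $ j) = (if i = j then 1 else 0)" for i j
  proof -
    have "(Wh ** W) $ i $ j = (\<Sum>k\<in>UNIV. cnj (W $ k $ i) * W $ k $ j)"
      unfolding Wh_def matrix_matrix_mult_def by simp
    then show ?thesis unfolding WW by (simp add: Finite_Cartesian_Product.mat_def)
  qed
  have "complex_of_real (\<Sum>k\<in>UNIV. (cmod ((W *v v) $ k))\<^sup>2) = (\<Sum>k\<in>UNIV. cnj ((W *v v) $ k) * (W *v v) $ k)"
    by (simp add: sum_cnj_mult_self)
  also have "\<dots> = (\<Sum>k\<in>UNIV. \<Sum>i\<in>UNIV. \<Sum>j\<in>UNIV. cnj (v $ i) * v $ j * (cnj (W $ k $ i) * W $ k $ j))"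
    unfolding matrix_vector_mult_def
    by (simp add: sum_distrib_left sum_distrib_right mult_ac)
  also have "\<dots> = (\<Sum>i\<in>UNIV. \<Sum>j\<in>UNIV. \<Sum>k\<in>UNIV. cnj (v $ i) * v $ j * (cnj (W $ k $ i) * W $ k $ j))"
    by (subst sum.swap) (intro sum.cong refl sum.swap)
  also have "\<dots> = (\<Sum>i\<in>UNIV. \<Sum>j\<in>UNIV. cnj (v $ i) * v $ j * (\<Sum>k\<in>UNIV. cnj (W $ k $ i) * W $ k $ j))"
    by (simp add: sum_distrib_left)
  also have "\<dots> = (\<Sum>i\<in>UNIV. cnj (v $ i) * v $ i)"
    unfolding col by (simp add: if_distrib cong: if_cong)
  also have "\<dots> = complex_of_real (\<Sum>k\<in>UNIV. (cmod (v $ k))\<^sup>2)"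
    by (simp add: sum_cnj_mult_self)
  finally show ?thesis by (simp only: of_real_eq_iff)
qed

lemma slice_norm_scaled_unitary:
  fixes W :: "complex^'p::finite^'p"
  assumes W: "cmat_unitary W" and L: "L = (\<chi> i j. c * W $ i $ j)"
  shows "slice_norm dims (\<lambda>xs. L *v S xs) n a = cmod c * slice_norm dims S n a"
proof -
  have sq: "(\<Sum>k\<in>UNIV. (cmod ((L *v v) $ k))\<^sup>2) = (cmod c)\<^sup>2 * (\<Sum>k\<in>UNIV. (cmod (v $ k))\<^sup>2)" for v
  proof -
    have "(L *v v) $ k = c * (W *v v) $ k" for k
      unfolding L matrix_vector_mult_def by (simp add: sum_distrib_left mult_ac)
    then have "(\<Sum>k\<in>UNIV. (cmod ((L *v v) $ k))\<^sup>2) = (cmod c)\<^sup>2 * (\<Sum>k\<in>UNIV. (cmod ((W *v v) $ k))\<^sup>2)"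
      by (simp add: norm_mult power_mult_distrib sum_distrib_left)
    then show ?thesis using cmat_unitary_sum_cmod_sq[OF W] by simp
  qed
  show ?thesis
    unfolding slice_norm_def sq sum_distrib_left[symmetric] real_sqrt_mult by simp
qed

lemma ordered_slices_scaled_unitary:
  fixes W :: "complex^'p::finite^'p"
  assumes "c \<noteq> 0" "cmat_unitary W" "L = (\<chi> i j. c * W $ i $ j)"
    and "ordered_slices dims (\<lambda>xs. L *v S xs)"
  shows "ordered_slices dims S"
  using assms unfolding ordered_slices_def slice_norm_scaled_unitary[OF assms(2,3)] by simp

theorem theorem4p2:
  fixes L :: "complex^('p::finite)^'p" and dims :: "nat list" and A :: "nat list \<Rightarrow> complex^'p"
  assumes "invertible L"
  shows "(\<exists>S Us. (\<forall>n<length dims. tunitary L (dims!n) (Us n))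
                \<and> all_orthogonal L dims S
                \<and> (\<forall>is\<in>idx_set dims. A is = multi_mode_prod L dims S Us is))
       \<and> ((\<exists>c W. c \<noteq> 0 \<and> cmat_unitary W \<and> L = (\<chi> i j. c * W$i$j)) \<longrightarrow>
          (\<exists>S Us. (\<forall>n<length dims. tunitary L (dims!n) (Us n))
                \<and> all_orthogonal L dims S
                \<and> ordered_slices dims S
                \<and> (\<forall>is\<in>idx_set dims. A is = multi_mode_prod L dims S Us is)))"
proof -
  obtain S Us where hosvd: "\<forall>n<length dims. tunitary L (dims!n) (Us n)" "all_orthogonal L dims S"
      "\<forall>is\<in>idx_set dims. A is = multi_mode_prod L dims S Us is"
    and ordered: "ordered_slices dims (\<lambda>xs. L *v S xs)"
    using tubal_hosvd_transform_ordered[OF assms] by blast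
  have "ordered_slices dims S" if "\<exists>c W. c \<noteq> 0 \<and> cmat_unitary W \<and> L = (\<chi> i j. c * W$i$j)"
    using that ordered ordered_slices_scaled_unitary by blast
  with hosvd show ?thesis by blast
qed

end
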